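(* For every integer $n \geq 5$, $\gamma_{b,2}(C_5 \square C_n) = n$.
   Context: For a graph $G$, a $2$-limited broadcast is a function $f: V(G) \to \{0,1,2\}$. A vertex $u$ hears the broadcast from $v$ if $f(v) > 0$ and $d(u,v) \leq f(v)$, where $d$ is the distance in $G$. The broadcast $f$ is dominating if every vertex of $G$ hears the broadcast from some vertex. The cost of $f$ is $\sum_{v \in V(G)} f(v)$. The $2$-limited broadcast domination number $\gamma_{b,2}(G)$ is the minimum cost of a $2$-limited dominating broadcast on $G$. $C_n$ denotes the cycle on $n$ vertices and $\square$ the Cartesian product of graphs. *)

theory Defs
  imports Main
begin

fun walk :: "('a \<Rightarrow> 'a \<Rightarrow> bool) \<Rightarrow> nat \<Rightarrow> 'a \<Rightarrow> 'a \<Rightarrow> bool" where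
  "walk E 0 u v = (u = v)"
| "walk E (Suc k) u v = (\<exists>w. E u w \<and> walk E k w v)"

(* graph distance (shortest walk length); all graphs used below are connected *)
definition gdist :: "('a \<Rightarrow> 'a \<Rightarrow> bool) \<Rightarrow> 'a \<Rightarrow> 'a \<Rightarrow> nat" where
  "gdist E u v = (LEAST k. walk E k u v)"

definition limited_broadcast2 :: "'a set \<Rightarrow> ('a \<Rightarrow> nat) \<Rightarrow> bool" where
  "limited_broadcast2 V f \<longleftrightarrow> (\<forall>v\<in>V. f v \<le> 2) \<and> (\<forall>v. v \<notin> V \<longrightarrow> f v = 0)"

definition hears :: "('a \<Rightarrow> 'a \<Rightarrow> bool) \<Rightarrow> ('a \<Rightarrow> nat) \<Rightarrow> 'a \<Rightarrow> 'a \<Rightarrow> bool" where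
  "hears E f u v \<longleftrightarrow> f v > 0 \<and> gdist E u v \<le> f v"

definition dominating_broadcast2 :: "'a set \<Rightarrow> ('a \<Rightarrow> 'a \<Rightarrow> bool) \<Rightarrow> ('a \<Rightarrow> nat) \<Rightarrow> bool" where
  "dominating_broadcast2 V E f \<longleftrightarrow>
     limited_broadcast2 V f \<and> (\<forall>u\<in>V. \<exists>v\<in>V. hears E f u v)"

definition bcost :: "'a set \<Rightarrow> ('a \<Rightarrow> nat) \<Rightarrow> nat" where
  "bcost V f = (\<Sum>v\<in>V. f v)"

definition gamma_b2 :: "'a set \<Rightarrow> ('a \<Rightarrow> 'a \<Rightarrow> bool) \<Rightarrow> nat" where
  "gamma_b2 V E = (LEAST c. \<exists>f. dominating_broadcast2 V E f \<and> bcost V f = c)"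

definition cycle_verts :: "nat \<Rightarrow> nat set" where
  "cycle_verts n = {0..<n}"

definition cycle_adj :: "nat \<Rightarrow> nat \<Rightarrow> nat \<Rightarrow> bool" where
  "cycle_adj n i j \<longleftrightarrow> i < n \<and> j < n \<and> (j = (i + 1) mod n \<or> i = (j + 1) mod n)"

definition cart_verts :: "'a set \<Rightarrow> 'b set \<Rightarrow> ('a \<times> 'b) set" where
  "cart_verts V W = V \<times> W"

definition cart_adj :: "('a \<Rightarrow> 'a \<Rightarrow> bool) \<Rightarrow> ('b \<Rightarrow> 'b \<Rightarrow> bool) \<Rightarrow> ('a \<times> 'b) \<Rightarrow> ('a \<times> 'b) \<Rightarrow> bool" where
  "cart_adj E F p q \<longleftrightarrow> (fst p = fst q \<and> F (snd p) (snd q)) \<or> (snd p = snd q \<and> E (fst p) (fst q))"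

end

theory Submission
  imports Defs
begin

text \<open>
  Lower bound: weigh each column of \<open>C\<^sub>5 \<box> C\<^sub>n\<close> by the total cost broadcast from it.
  Broadcasts have range at most 2, so every vertex of an empty column hears a column at
  distance 1 or 2, and a column of weight \<open>c\<close> is heard in at most \<open>c + c div 2\<close> rows of an
  adjacent column and in at most \<open>c div 2\<close> rows of a column at distance 2. A discharging
  argument around the cycle of columns then shows that the weights add up to at least \<open>n\<close>.

  Upper bound: the strip \<open>C\<^sub>5 \<times> P\<^sub>w\<close> carries broadcasts of cost \<open>w\<close> for \<open>w = 4, 5, 6\<close>
  which dominate it with the help of a broadcast of cost 2 at the first vertex of the next
  strip. Gluing such blocks around the cycle handles every \<open>n \<ge> 4\<close> except \<open>n = 7\<close>, which is
  done by hand.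
\<close>

abbreviation torus_verts :: "nat \<Rightarrow> nat \<Rightarrow> (nat \<times> nat) set" where
  "torus_verts m n \<equiv> cart_verts (cycle_verts m) (cycle_verts n)"

abbreviation torus_adj :: "nat \<Rightarrow> nat \<Rightarrow> nat \<times> nat \<Rightarrow> nat \<times> nat \<Rightarrow> bool" where
  "torus_adj m n \<equiv> cart_adj (cycle_adj m) (cycle_adj n)"

definition absdiff :: "nat \<Rightarrow> nat \<Rightarrow> nat" where
  "absdiff a b = (if a \<le> b then b - a else a - b)"

definition cycle_dist :: "nat \<Rightarrow> nat \<Rightarrow> nat \<Rightarrow> nat" where
  "cycle_dist m a b = min (absdiff a b) (m - absdiff a b)"

lemma cycle_dist_commute: "cycle_dist m a b = cycle_dist m b a"
  by (simp add: cycle_dist_def absdiff_def add.commute)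

lemma cycle_dist_le_absdiff: "cycle_dist m a b \<le> absdiff a b"
  by (simp add: cycle_dist_def)

lemma cycle_dist_eq_0_iff:
  assumes "a < m" "b < m"
  shows "cycle_dist m a b = 0 \<longleftrightarrow> a = b"
  using assms by (auto simp: cycle_dist_def absdiff_def)

lemma cycle_dist_forward:
  assumes "a < m" "b < m"
  shows "b = (a + cycle_dist m a b) mod m \<or> a = (b + cycle_dist m a b) mod m"
  using assms by (cases "a \<le> b") (auto simp: cycle_dist_def absdiff_def min_def)

lemma cycle_dist_mod_cases:
  assumes "a < m" "b < m"
  defines "d \<equiv> int (cycle_dist m a b)"
  shows "int b = (int a + d) mod int m \<or> int b = (int a - d) mod int m"
  using cycle_dist_forward[OF assms(1,2)]
proof
  assume "b = (a + cycle_dist m a b) mod m"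
  then show ?thesis unfolding d_def by (metis of_nat_add of_nat_mod)
next
  assume "a = (b + cycle_dist m a b) mod m"
  then have "int a = (int b + d) mod int m" unfolding d_def by (metis of_nat_add of_nat_mod)
  then have "(int a - d) mod int m = int b mod int m" by (simp add: mod_diff_left_eq)
  then show ?thesis using assms(2) by simp
qed

lemma cycle_adj_cases:
  assumes "cycle_adj m x y"
  shows "x < m \<and> y < m \<and> (y = x + 1 \<or> x = y + 1 \<or> (x + 1 = m \<and> y = 0) \<or> (y + 1 = m \<and> x = 0))"
  using assms unfolding cycle_adj_def by (auto simp: mod_if split: if_splits)

lemma cycle_dist_step:
  assumes "cycle_adj m x y" "c < m"
  shows "cycle_dist m x c \<le> cycle_dist m y c + 1"
  using cycle_adj_cases[OF assms(1)] assms(2) by (auto simp: cycle_dist_def absdiff_def min_def)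

lemma card_cycle_ball_le:
  assumes "a < m"
  shows "card {i. i < m \<and> cycle_dist m i a \<le> r} \<le> 2 * r + 1"
proof -
  let ?fwd = "\<lambda>t. (a + t) mod m" and ?bwd = "\<lambda>t. nat ((int a - int t) mod int m)"
  have "{i. i < m \<and> cycle_dist m i a \<le> r} \<subseteq> ?fwd ` {..r} \<union> ?bwd ` {1..r}"
  proof safe
    fix i assume i: "i < m" "cycle_dist m i a \<le> r" "i \<notin> ?bwd ` {1..r}"
    let ?d = "cycle_dist m a i"
    have d: "?d \<le> r" using i(2) by (simp add: cycle_dist_commute)
    consider "int i = (int a + int ?d) mod int m" | "int i = (int a - int ?d) mod int m"
      using cycle_dist_mod_cases[OF assms i(1)] by blast
    then show "i \<in> ?fwd ` {..r}"
    proof cases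
      case 1
      then have "i = (a + ?d) mod m" by (metis nat_int of_nat_add of_nat_mod)
      then show ?thesis using d by blast
    next
      case 2
      show ?thesis
      proof (cases "?d = 0")
        case True
        then have "i = (a + 0) mod m" using cycle_dist_eq_0_iff[OF assms i(1)] assms by simp
        then show ?thesis by blast
      next
        case False
        then have "i = ?bwd ?d" "?d \<in> {1..r}" using 2 d by auto
        then show ?thesis using i(3) by blast
      qed
    qed
  qed
  then have "card {i. i < m \<and> cycle_dist m i a \<le> r} \<le> card (?fwd ` {..r} \<union> ?bwd ` {1..r})"
    by (intro card_mono) auto
  also have "\<dots> \<le> card (?fwd ` {..r}) + card (?bwd ` {1..r})" by (rule card_Un_le)
  also have "\<dots> \<le> card {..r} + card {1..r}" by (intro add_mono card_image_le) auto
  finally show ?thesis by simp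
qed

lemma walk_append: "walk E k u w \<Longrightarrow> walk E l w v \<Longrightarrow> walk E (k + l) u v"
  by (induction k arbitrary: u) auto

lemma walk_reverse:
  assumes "\<And>x y. E x y \<Longrightarrow> E y x"
  shows "walk E k u v \<Longrightarrow> walk E k v u"
proof (induction k arbitrary: u)
  case (Suc k)
  then obtain w where "E u w" "walk E k w v" by auto
  then show ?case using Suc.IH walk_append[of E k v w 1 u] assms by auto
qed simp

lemma walk_potential_bound:
  assumes "\<And>x y. E x y \<Longrightarrow> \<phi> x \<le> \<phi> y + 1"
  shows "walk E k u v \<Longrightarrow> \<phi> u \<le> \<phi> v + k"
  by (induction k arbitrary: u) (force dest: assms)+

lemma gdist_eqI:
  assumes "walk E k u v" "\<And>l. walk E l u v \<Longrightarrow> k \<le> l"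
  shows "gdist E u v = k"
  unfolding gdist_def using assms by (rule Least_equality)

lemma cycle_walk_forward: "a < m \<Longrightarrow> walk (cycle_adj m) k a ((a + k) mod m)"
proof (induction k arbitrary: a)
  case (Suc k)
  then have "cycle_adj m a ((a + 1) mod m)" "(a + 1) mod m < m" by (auto simp: cycle_adj_def)
  moreover have "((a + 1) mod m + k) mod m = (a + Suc k) mod m" by (simp add: mod_add_left_eq)
  ultimately show ?case using Suc.IH by (metis walk.simps(2))
qed simp

lemma cycle_walk:
  assumes "a < m" "b < m"
  shows "walk (cycle_adj m) (cycle_dist m a b) a b"
  using cycle_dist_forward[OF assms]
proof
  assume "a = (b + cycle_dist m a b) mod m"
  then have "walk (cycle_adj m) (cycle_dist m a b) b a" by (metis cycle_walk_forward assms(2))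
  then show ?thesis by (rule walk_reverse[rotated]) (auto simp: cycle_adj_def)
qed (metis cycle_walk_forward assms(1))

lemma walk_cart_adj_fst: "walk E k a b \<Longrightarrow> walk (cart_adj E F) k (a, y) (b, y)"
  by (induction k arbitrary: a) (auto simp: cart_adj_def)

lemma walk_cart_adj_snd: "walk F k a b \<Longrightarrow> walk (cart_adj E F) k (x, a) (x, b)"
  by (induction k arbitrary: a) (auto simp: cart_adj_def)

lemma torus_gdist:
  assumes "a < m" "c < m" "b < n" "d < n"
  shows "gdist (torus_adj m n) (a, b) (c, d) = cycle_dist m a c + cycle_dist n b d"
proof (rule gdist_eqI)
  show "walk (torus_adj m n) (cycle_dist m a c + cycle_dist n b d) (a, b) (c, d)"
    using assms by (intro walk_append[where w = "(c, b)"] walk_cart_adj_fst walk_cart_adj_snd cycle_walk)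
next
  fix l assume walk: "walk (torus_adj m n) l (a, b) (c, d)"
  let ?\<phi> = "\<lambda>x. cycle_dist m (fst x) c + cycle_dist n (snd x) d"
  have "?\<phi> x \<le> ?\<phi> y + 1" if "torus_adj m n x y" for x y
    using that cycle_dist_step[of m _ _ c] cycle_dist_step[of n _ _ d] assms
    by (auto simp: cart_adj_def)
  moreover have "?\<phi> (c, d) = 0" using assms by (simp add: cycle_dist_eq_0_iff)
  ultimately show "cycle_dist m a c + cycle_dist n b d \<le> l"
    using walk_potential_bound[OF _ walk, of ?\<phi>] by simp
qed

lemma dominating_broadcast2_torus_iff:
  "dominating_broadcast2 (torus_verts m n) (torus_adj m n) f \<longleftrightarrow>
     limited_broadcast2 (torus_verts m n) f \<and>
     (\<forall>i<m. \<forall>j<n. \<exists>a<m. \<exists>k<n. 0 < f (a, k) \<and> cycle_dist m i a + cycle_dist n j k \<le> f (a, k))"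
proof -
  have "hears (torus_adj m n) f (i, j) (a, k) \<longleftrightarrow>
          0 < f (a, k) \<and> cycle_dist m i a + cycle_dist n j k \<le> f (a, k)"
    if "i < m" "j < n" "a < m" "k < n" for i j a k
    using that by (simp add: hears_def torus_gdist)
  then show ?thesis
    by (fastforce simp: dominating_broadcast2_def cart_verts_def cycle_verts_def)
qed

lemma bcost_torus: "bcost (torus_verts m n) f = (\<Sum>k<n. \<Sum>i<m. f (i, k))"
proof -
  have "bcost (torus_verts m n) f = (\<Sum>i<m. \<Sum>k<n. f (i, k))"
    by (simp add: bcost_def cart_verts_def cycle_verts_def atLeast0LessThan sum.cartesian_product)
  then show ?thesis by (simp add: sum.swap[of _ "{..<m}"])
qed

lemma gamma_b2_eqI:
  assumes "dominating_broadcast2 V E f" "bcost V f = c"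
    and "\<And>g. dominating_broadcast2 V E g \<Longrightarrow> c \<le> bcost V g"
  shows "gamma_b2 V E = c"
  unfolding gamma_b2_def by (rule Least_equality) (use assms in auto)

lemma sum_div_le_div_sum:
  fixes g :: "'a \<Rightarrow> nat"
  shows "(\<Sum>a\<in>A. g a div k) \<le> (\<Sum>a\<in>A. g a) div k"
proof (induction A rule: infinite_finite_induct)
  case (insert x F)
  have "g x div k + sum g F div k \<le> (g x + sum g F) div k"
    by (simp add: div_add1_eq[of "g x" "sum g F" k])
  then show ?case using insert by simp
qed simp_all

definition hearing_rows :: "nat \<Rightarrow> nat \<Rightarrow> (nat \<Rightarrow> nat) \<Rightarrow> nat set" where
  "hearing_rows m d g = {i. i < m \<and> (\<exists>a<m. 0 < g a \<and> cycle_dist m i a + d \<le> g a)}"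

lemma card_hearing_rows_le:
  "card (hearing_rows m d g) \<le> (\<Sum>a<m. if 0 < g a \<and> d \<le> g a then 2 * (g a - d) + 1 else 0)"
proof -
  let ?B = "\<lambda>a. if 0 < g a \<and> d \<le> g a then {i. i < m \<and> cycle_dist m i a \<le> g a - d} else {}"
  have "hearing_rows m d g \<subseteq> (\<Union>a<m. ?B a)"
    by (force simp: hearing_rows_def)
  then have "card (hearing_rows m d g) \<le> card (\<Union>a<m. ?B a)"
    by (intro card_mono) auto
  also have "\<dots> \<le> (\<Sum>a<m. card (?B a))" by (rule card_UN_le) simp
  also have "\<dots> \<le> (\<Sum>a<m. if 0 < g a \<and> d \<le> g a then 2 * (g a - d) + 1 else 0)"
    by (intro sum_mono) (use card_cycle_ball_le in auto)
  finally show ?thesis .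
qed

text \<open>A broadcast of cost 2 is heard in 3 rows of an adjacent column and in 1 row of a column at
  distance 2; one of cost 1 only in 1 row of an adjacent column.\<close>

definition near_reach :: "nat \<Rightarrow> nat" where
  "near_reach c = c + c div 2"

definition far_reach :: "nat \<Rightarrow> nat" where
  "far_reach c = c div 2"

lemma card_hearing_rows_near:
  assumes "\<And>a. a < m \<Longrightarrow> g a \<le> 2"
  shows "card (hearing_rows m 1 g) \<le> near_reach (\<Sum>a<m. g a)"
proof -
  have "(if 0 < g a \<and> 1 \<le> g a then 2 * (g a - 1) + 1 else 0) = g a + g a div 2" if "a < m" for a
    using assms[OF that] by (auto simp: le_Suc_eq numeral_2_eq_2)
  then have "card (hearing_rows m 1 g) \<le> (\<Sum>a<m. g a + g a div 2)"
    using card_hearing_rows_le[of m 1 g] by simp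
  also have "\<dots> \<le> near_reach (\<Sum>a<m. g a)"
    using sum_div_le_div_sum[of g 2 "{..<m}"] by (simp add: near_reach_def sum.distrib)
  finally show ?thesis .
qed

lemma card_hearing_rows_far:
  assumes "\<And>a. a < m \<Longrightarrow> g a \<le> 2"
  shows "card (hearing_rows m 2 g) \<le> far_reach (\<Sum>a<m. g a)"
proof -
  have "(if 0 < g a \<and> 2 \<le> g a then 2 * (g a - 2) + 1 else 0) = g a div 2" if "a < m" for a
    using assms[OF that] by (auto simp: le_Suc_eq numeral_2_eq_2)
  then have "card (hearing_rows m 2 g) \<le> (\<Sum>a<m. g a div 2)"
    using card_hearing_rows_le[of m 2 g] by simp
  also have "\<dots> \<le> far_reach (\<Sum>a<m. g a)"
    using sum_div_le_div_sum[of g 2 "{..<m}"] by (simp add: far_reach_def)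
  finally show ?thesis .
qed

definition column :: "(nat \<times> nat \<Rightarrow> nat) \<Rightarrow> nat \<Rightarrow> int \<Rightarrow> nat \<Rightarrow> nat" where
  "column f n z a = f (a, nat (z mod int n))"

definition column_weight :: "(nat \<times> nat \<Rightarrow> nat) \<Rightarrow> nat \<Rightarrow> nat \<Rightarrow> int \<Rightarrow> nat" where
  "column_weight f m n z = (\<Sum>a<m. column f n z a)"

lemma limited_broadcast2_le: "limited_broadcast2 V f \<Longrightarrow> f v \<le> 2"
  unfolding limited_broadcast2_def by (cases "v \<in> V") auto

lemma empty_column_heard_nearby:
  assumes dom: "dominating_broadcast2 (torus_verts m n) (torus_adj m n) f"
    and "0 < n" and empty: "column_weight f m n z = 0" and i: "i < m"
  shows "i \<in> hearing_rows m 1 (column f n (z - 1)) \<union> hearing_rows m 1 (column f n (z + 1))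
           \<union> hearing_rows m 2 (column f n (z - 2)) \<union> hearing_rows m 2 (column f n (z + 2))"
proof -
  define j where "j = nat (z mod int n)"
  have j: "j < n" "int j = z mod int n" using \<open>0 < n\<close> by (simp_all add: j_def nat_less_iff)
  obtain a k where ak: "a < m" "k < n"
    and heard: "0 < f (a, k)" "cycle_dist m i a + cycle_dist n j k \<le> f (a, k)"
    using dom i j(1) unfolding dominating_broadcast2_torus_iff by blast
  define d where "d = cycle_dist n j k"
  note heard = heard[folded d_def]
  have "f (a, j) = 0" using empty ak(1) by (simp add: column_weight_def column_def j_def)
  then have "d \<noteq> 0" using heard cycle_dist_eq_0_iff[OF j(1) ak(2)] by (auto simp: d_def)
  moreover have "d \<le> 2"
    using heard dom limited_broadcast2_le[of "torus_verts m n" f "(a, k)"]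
    by (auto simp: dominating_broadcast2_def)
  moreover have "int k = (z + int d) mod int n \<or> int k = (z - int d) mod int n"
    using cycle_dist_mod_cases[OF j(1) ak(2)] j(2) unfolding d_def
    by (simp add: mod_add_left_eq mod_diff_left_eq)
  then obtain y where "y = z + int d \<or> y = z - int d" "column f n y a = f (a, k)"
    by (metis column_def nat_int)
  then have "i \<in> hearing_rows m d (column f n y) \<and> (y = z + int d \<or> y = z - int d)"
    using heard i ak(1) by (auto simp: hearing_rows_def)
  ultimately show ?thesis by (auto simp: le_Suc_eq numeral_2_eq_2)
qed

lemma empty_column_coverage:
  assumes dom: "dominating_broadcast2 (torus_verts m n) (torus_adj m n) f"
    and "0 < n" and empty: "column_weight f m n z = 0"
  shows "m \<le> near_reach (column_weight f m n (z - 1)) + near_reach (column_weight f m n (z + 1))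
            + far_reach (column_weight f m n (z - 2)) + far_reach (column_weight f m n (z + 2))"
proof -
  let ?H = "\<lambda>d y. hearing_rows m d (column f n y)"
  have "{..<m} \<subseteq> ?H 1 (z - 1) \<union> ?H 1 (z + 1) \<union> ?H 2 (z - 2) \<union> ?H 2 (z + 2)"
    using empty_column_heard_nearby[OF assms] by blast
  moreover have "finite (?H d y)" for d y
    by (rule finite_subset[of _ "{..<m}"]) (auto simp: hearing_rows_def)
  ultimately have "m \<le> card (?H 1 (z - 1) \<union> ?H 1 (z + 1) \<union> ?H 2 (z - 2) \<union> ?H 2 (z + 2))"
    by (metis card_lessThan card_mono finite_UnI)
  also have "\<dots> \<le> card (?H 1 (z - 1)) + card (?H 1 (z + 1)) + card (?H 2 (z - 2)) + card (?H 2 (z + 2))"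
    by (intro order_trans[OF card_Un_le] add_mono order_refl)
  also have "\<dots> \<le> near_reach (column_weight f m n (z - 1)) + near_reach (column_weight f m n (z + 1))
            + far_reach (column_weight f m n (z - 2)) + far_reach (column_weight f m n (z + 2))"
    unfolding column_weight_def using dom limited_broadcast2_le
    by (intro add_mono card_hearing_rows_near card_hearing_rows_far)
       (auto simp: column_def dominating_broadcast2_def)
  finally show ?thesis .
qed

lemma periodic_sum_shift:
  fixes g :: "int \<Rightarrow> 'a::cancel_comm_monoid_add"
  assumes periodic: "\<And>z. g (z + int n) = g z"
  shows "(\<Sum>k<n. g (int k + d)) = (\<Sum>k<n. g (int k))"
proof -
  have shift1: "(\<Sum>k<n. g (int k + c + 1)) = (\<Sum>k<n. g (int k + c))" for c
  proof -
    have "(\<Sum>k<Suc n. g (int k + c)) = g c + (\<Sum>k<n. g (int k + c + 1))"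
      by (subst sum.lessThan_Suc_shift) (simp add: algebra_simps)
    moreover have "(\<Sum>k<Suc n. g (int k + c)) = (\<Sum>k<n. g (int k + c)) + g c"
      using periodic[of c] by (simp add: add.commute)
    ultimately show ?thesis by (metis add.commute add_left_cancel)
  qed
  show ?thesis
  proof (induction d rule: int_induct[where k = 0])
    fix i :: int assume "(\<Sum>k<n. g (int k + i)) = (\<Sum>k<n. g (int k))"
    then show "(\<Sum>k<n. g (int k + (i + 1))) = (\<Sum>k<n. g (int k))"
      and "(\<Sum>k<n. g (int k + (i - 1))) = (\<Sum>k<n. g (int k))"
      using shift1[of i] shift1[of "i - 1"] by (simp_all add: add.assoc)
  qed simp
qed

text \<open>Discharging rule: a column of weight \<open>c\<close> keeps 2 of its \<open>2 c\<close> units and spends at most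
  \<open>c - 1\<close> on each side, first \<open>near_share c\<close> on an empty neighbour, then the rest on an empty
  column at distance 2.\<close>

definition near_share :: "nat \<Rightarrow> nat" where
  "near_share c = min 2 (c - 1)"

definition far_share :: "nat \<Rightarrow> nat \<Rightarrow> nat" where
  "far_share x c = c - 1 - (if x = 0 then near_share c else 0)"

definition near_gift :: "(int \<Rightarrow> nat) \<Rightarrow> int \<Rightarrow> int \<Rightarrow> nat" where
  "near_gift X z y = (if X y = 0 then near_share (X z) else 0)"

definition far_gift :: "(int \<Rightarrow> nat) \<Rightarrow> int \<Rightarrow> int \<Rightarrow> int \<Rightarrow> nat" where
  "far_gift X z y w = (if X w = 0 then far_share (X y) (X z) else 0)"

definition sent :: "(int \<Rightarrow> nat) \<Rightarrow> int \<Rightarrow> nat" where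
  "sent X z = near_gift X z (z - 1) + near_gift X z (z + 1)
              + far_gift X z (z - 1) (z - 2) + far_gift X z (z + 1) (z + 2)"

definition received :: "(int \<Rightarrow> nat) \<Rightarrow> int \<Rightarrow> nat" where
  "received X z = near_gift X (z - 1) z + near_gift X (z + 1) z
                  + far_gift X (z - 2) (z - 1) z + far_gift X (z + 2) (z + 1) z"

lemma shares_le_surplus:
  "(if x = 0 then near_share c else 0) + (if u = 0 then far_share x c else 0) \<le> c - 1"
  by (auto simp: near_share_def far_share_def)

lemma shares_received_ge_two:
  assumes "5 \<le> near_reach a + near_reach b + far_reach c + far_reach d"
  shows "2 \<le> near_share a + near_share b + far_share a c + far_share b d"
proof -
  have far: "x = 0 \<Longrightarrow> far_share x c + 3 \<ge> c" "x \<noteq> 0 \<Longrightarrow> far_share x c + 1 \<ge> c" for x c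
    by (auto simp: far_share_def near_share_def)
  consider "3 \<le> a" | "3 \<le> b" | "a \<le> 2" "b \<le> 2" by linarith
  then show ?thesis
  proof cases
    case 3
    then have "a \<in> {0, 1, 2}" "b \<in> {0, 1, 2}" by auto
    then show ?thesis using assms far[of a c] far[of b d]
      by (auto simp: near_reach_def far_reach_def near_share_def; presburger)
  qed (auto simp: near_share_def)
qed

lemma charge_balance:
  assumes "X z = 0 \<Longrightarrow>
    5 \<le> near_reach (X (z - 1)) + near_reach (X (z + 1)) + far_reach (X (z - 2)) + far_reach (X (z + 2))"
  shows "2 + sent X z \<le> 2 * X z + received X z"
proof (cases "X z = 0")
  case True
  then have "sent X z = 0"
    by (simp add: sent_def near_gift_def far_gift_def near_share_def far_share_def)
  moreover have "2 \<le> received X z"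
    using shares_received_ge_two[OF assms[OF True]] True
    by (simp add: received_def near_gift_def far_gift_def)
  ultimately show ?thesis by simp
next
  case False
  then have "received X z = 0" by (simp add: received_def near_gift_def far_gift_def)
  moreover have "sent X z \<le> 2 * (X z - 1)"
    using shares_le_surplus[of "X (z - 1)" "X z" "X (z - 2)"]
      shares_le_surplus[of "X (z + 1)" "X z" "X (z + 2)"]
    unfolding sent_def near_gift_def far_gift_def by linarith
  ultimately show ?thesis using False by simp
qed

lemma sum_sent_eq_sum_received:
  assumes periodic: "\<And>z. X (z + int n) = X z"
  shows "(\<Sum>k<n. sent X (int k)) = (\<Sum>k<n. received X (int k))"
proof -
  have per: "X (z + int n + c) = X (z + c)" for z c
    using periodic[of "z + c"] by (simp add: ac_simps)
  have near: "near_gift X (z + int n + c) (z + int n) = near_gift X (z + c) z" for z c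
    by (simp add: near_gift_def per periodic)
  have far: "far_gift X (z + int n + c + c) (z + int n + c) (z + int n) = far_gift X (z + c + c) (z + c) z"
    for z c
  proof -
    have "X (z + int n + c + c) = X (z + c + c)" using per[of z "c + c"] by (simp only: add.assoc)
    then show ?thesis by (simp only: far_gift_def per periodic)
  qed
  have "(\<Sum>k<n. near_gift X (int k + -1 + 1) (int k + -1)) = (\<Sum>k<n. near_gift X (int k + 1) (int k))"
    by (rule periodic_sum_shift) (rule near)
  moreover have "(\<Sum>k<n. near_gift X (int k + 1 + -1) (int k + 1)) = (\<Sum>k<n. near_gift X (int k + -1) (int k))"
    by (rule periodic_sum_shift) (rule near)
  moreover have "(\<Sum>k<n. far_gift X (int k + -2 + 1 + 1) (int k + -2 + 1) (int k + -2))
                   = (\<Sum>k<n. far_gift X (int k + 1 + 1) (int k + 1) (int k))"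
    by (rule periodic_sum_shift) (rule far)
  moreover have "(\<Sum>k<n. far_gift X (int k + 2 + -1 + -1) (int k + 2 + -1) (int k + 2))
                   = (\<Sum>k<n. far_gift X (int k + -1 + -1) (int k + -1) (int k))"
    by (rule periodic_sum_shift) (rule far)
  ultimately show ?thesis by (simp add: sent_def received_def sum.distrib algebra_simps)
qed

lemma periodic_sum_ge_of_coverage:
  fixes X :: "int \<Rightarrow> nat"
  assumes periodic: "\<And>z. X (z + int n) = X z"
    and covered: "\<And>z. X z = 0 \<Longrightarrow>
      5 \<le> near_reach (X (z - 1)) + near_reach (X (z + 1)) + far_reach (X (z - 2)) + far_reach (X (z + 2))"
  shows "n \<le> (\<Sum>k<n. X (int k))"
proof -
  have "(\<Sum>k<n. 2 + sent X (int k)) \<le> (\<Sum>k<n. 2 * X (int k) + received X (int k))"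
    by (intro sum_mono charge_balance covered)
  moreover have "(\<Sum>k<n. 2 + sent X (int k)) = 2 * n + (\<Sum>k<n. sent X (int k))"
    by (simp only: sum.distrib) simp
  moreover have "(\<Sum>k<n. 2 * X (int k) + received X (int k))
                   = 2 * (\<Sum>k<n. X (int k)) + (\<Sum>k<n. received X (int k))"
    by (simp add: sum.distrib sum_distrib_left)
  ultimately show ?thesis using sum_sent_eq_sum_received[of X n, OF periodic] by linarith
qed

lemma dominating_torus_bcost_ge:
  assumes "5 \<le> m" and dom: "dominating_broadcast2 (torus_verts m n) (torus_adj m n) f"
  shows "n \<le> bcost (torus_verts m n) f"
proof (cases "n = 0")
  case False
  have "n \<le> (\<Sum>k<n. column_weight f m n (int k))"
  proof (rule periodic_sum_ge_of_coverage)
    show "column_weight f m n (z + int n) = column_weight f m n z" for z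
      by (simp add: column_weight_def column_def)
    show "5 \<le> near_reach (column_weight f m n (z - 1)) + near_reach (column_weight f m n (z + 1))
            + far_reach (column_weight f m n (z - 2)) + far_reach (column_weight f m n (z + 2))"
      if "column_weight f m n z = 0" for z
      using empty_column_coverage[OF dom _ that] False \<open>5 \<le> m\<close> by simp
  qed
  also have "\<dots> = bcost (torus_verts m n) f"
    by (simp add: bcost_torus column_weight_def column_def)
  finally show ?thesis .
qed simp

definition torus_broadcast :: "nat \<Rightarrow> nat \<Rightarrow> (nat \<Rightarrow> nat \<Rightarrow> nat) \<Rightarrow> nat \<times> nat \<Rightarrow> nat" where
  "torus_broadcast m n P = (\<lambda>(i, k). if i < m \<and> k < n then P i k else 0)"

lemma torus_broadcast_dominatingI:
  assumes "\<And>i k. P i k \<le> 2"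
    and "\<forall>i<m. \<forall>j<n. \<exists>a<m. \<exists>k<n. 0 < P a k \<and> cycle_dist m i a + cycle_dist n j k \<le> P a k"
  shows "dominating_broadcast2 (torus_verts m n) (torus_adj m n) (torus_broadcast m n P)"
proof -
  have "torus_broadcast m n P (a, k) = P a k" if "a < m" "k < n" for a k
    using that by (simp add: torus_broadcast_def)
  then have "\<exists>a<m. \<exists>k<n. 0 < torus_broadcast m n P (a, k)
               \<and> cycle_dist m i a + cycle_dist n j k \<le> torus_broadcast m n P (a, k)"
    if "i < m" "j < n" for i j
    using assms(2) that by metis
  moreover have "limited_broadcast2 (torus_verts m n) (torus_broadcast m n P)"
    using assms(1) by (auto simp: limited_broadcast2_def torus_broadcast_def cart_verts_def cycle_verts_def)
  ultimately show ?thesis unfolding dominating_broadcast2_torus_iff by blast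
qed

lemma bcost_torus_broadcast:
  "bcost (torus_verts m n) (torus_broadcast m n P) = (\<Sum>k<n. \<Sum>i<m. P i k)"
  by (simp add: bcost_torus torus_broadcast_def)

definition strip_reaches :: "nat \<Rightarrow> nat \<Rightarrow> nat \<Rightarrow> nat \<Rightarrow> nat \<Rightarrow> nat \<Rightarrow> bool" where
  "strip_reaches m s a k i j \<longleftrightarrow> 0 < s \<and> cycle_dist m i a + absdiff j k \<le> s"

text \<open>The vertex \<open>(0, w)\<close> stands for the first vertex of the next block, which always broadcasts
  with cost 2.\<close>

definition strip_dominating :: "nat \<Rightarrow> nat \<Rightarrow> (nat \<Rightarrow> nat \<Rightarrow> nat) \<Rightarrow> bool" where
  "strip_dominating m w P \<longleftrightarrow>
     (\<forall>i<m. \<forall>j<w. (\<exists>a<m. \<exists>k<w. strip_reaches m (P a k) a k i j) \<or> strip_reaches m 2 0 w i j)"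

lemma absdiff_diff_left: "w \<le> j \<Longrightarrow> absdiff (j - w) k = absdiff j (w + k)"
  by (auto simp: absdiff_def)

lemma torus_dominating_of_strip:
  assumes "strip_dominating m n P" "P 0 0 = 2" "\<And>i k. P i k \<le> 2"
  shows "dominating_broadcast2 (torus_verts m n) (torus_adj m n) (torus_broadcast m n P)"
proof (rule torus_broadcast_dominatingI[OF assms(3)], intro allI impI)
  fix i j assume ij: "i < m" "j < n"
  then consider a k where "a < m" "k < n" "strip_reaches m (P a k) a k i j"
    | "strip_reaches m 2 0 n i j"
    using assms(1) unfolding strip_dominating_def by blast
  then show "\<exists>a<m. \<exists>k<n. 0 < P a k \<and> cycle_dist m i a + cycle_dist n j k \<le> P a k"
  proof cases
    case 1
    then show ?thesis using cycle_dist_le_absdiff[of n j k]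
      by (intro exI[of _ a] exI[of _ k]) (auto simp: strip_reaches_def)
  next
    case 2
    have "cycle_dist n j 0 \<le> absdiff j n" using ij by (simp add: cycle_dist_def absdiff_def)
    then have "0 < P 0 0 \<and> cycle_dist m i 0 + cycle_dist n j 0 \<le> P 0 0"
      using 2 assms(2) by (simp add: strip_reaches_def)
    moreover have "0 < m" "0 < n" using ij by auto
    ultimately show ?thesis by blast
  qed
qed

type_synonym block = "nat \<times> (nat \<Rightarrow> nat \<Rightarrow> nat)"

fun good_block :: "nat \<Rightarrow> block \<Rightarrow> bool" where
  "good_block m (w, P) \<longleftrightarrow> 0 < w \<and> P 0 0 = 2 \<and> (\<forall>i k. P i k \<le> 2) \<and> strip_dominating m w P"

fun concat_blocks :: "block list \<Rightarrow> nat \<Rightarrow> nat \<Rightarrow> nat" where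
  "concat_blocks [] i k = 0"
| "concat_blocks ((w, P) # bs) i k = (if k < w then P i k else concat_blocks bs i (k - w))"

lemma concat_blocks_le2: "\<forall>b\<in>set bs. good_block m b \<Longrightarrow> concat_blocks bs i k \<le> 2"
  by (induction bs i k rule: concat_blocks.induct) auto

lemma concat_blocks_start: "good_block m b \<Longrightarrow> concat_blocks (b # bs) 0 0 = 2"
  by (cases b) simp

lemma strip_dominating_glue:
  assumes good: "good_block m (w, P)" and strip: "strip_dominating m W Q"
    and start: "0 < W \<Longrightarrow> Q 0 0 = 2"
  shows "strip_dominating m (w + W) (\<lambda>i k. if k < w then P i k else Q i (k - w))"
  unfolding strip_dominating_def
proof (intro allI impI)
  let ?R = "\<lambda>i k. if k < w then P i k else Q i (k - w)"
  fix i j assume i: "i < m" and j: "j < w + W"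
  show "(\<exists>a<m. \<exists>k<w + W. strip_reaches m (?R a k) a k i j) \<or> strip_reaches m 2 0 (w + W) i j"
  proof (cases "j < w")
    case True
    then consider a k where "a < m" "k < w" "strip_reaches m (P a k) a k i j"
      | "strip_reaches m 2 0 w i j"
      using good i unfolding good_block.simps strip_dominating_def by blast
    then show ?thesis
    proof cases
      case 1
      then have "strip_reaches m (?R a k) a k i j" "k < w + W" by auto
      then show ?thesis using \<open>a < m\<close> by blast
    next
      case 2
      show ?thesis
      proof (cases "W = 0")
        case False
        then have "strip_reaches m (?R 0 w) 0 w i j" "w < w + W" "0 < m" using 2 start i by auto
        then show ?thesis by blast
      qed (use 2 in simp)
    qed
  next
    case False
    then have "j - w < W" using j by auto
    then consider a k where "a < m" "k < W" "strip_reaches m (Q a k) a k i (j - w)"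
      | "strip_reaches m 2 0 W i (j - w)"
      using strip i unfolding strip_dominating_def by blast
    then show ?thesis
    proof cases
      case 1
      then have "strip_reaches m (?R a (w + k)) a (w + k) i j"
        using False by (simp add: strip_reaches_def absdiff_diff_left)
      moreover have "w + k < w + W" using 1 by simp
      ultimately show ?thesis using 1 by blast
    next
      case 2
      then show ?thesis using False by (simp add: strip_reaches_def absdiff_diff_left)
    qed
  qed
qed

lemma strip_dominating_concat_blocks:
  "\<forall>b\<in>set bs. good_block m b \<Longrightarrow> strip_dominating m (sum_list (map fst bs)) (concat_blocks bs)"
proof (induction bs)
  case Nil
  then show ?case by (simp add: strip_dominating_def)
next
  case (Cons b bs)
  obtain w P where b: "b = (w, P)" by force
  have "concat_blocks bs 0 0 = 2" if "0 < sum_list (map fst bs)"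
    using that Cons.prems concat_blocks_start by (cases bs) auto
  then show ?case using Cons b strip_dominating_glue[of m w P] by simp
qed

lemma sum_lessThan_add: "(\<Sum>k<a + b :: nat. g k) = (\<Sum>k<a. g k) + (\<Sum>k<b. g (a + k))"
  by (induction b) (simp_all add: add.assoc)

definition block_cost :: "nat \<Rightarrow> block \<Rightarrow> nat" where
  "block_cost m b = (\<Sum>k<fst b. \<Sum>i<m. snd b i k)"

lemma cost_concat_blocks:
  "(\<Sum>k<sum_list (map fst bs). \<Sum>i<m. concat_blocks bs i k) = sum_list (map (block_cost m) bs)"
proof (induction bs)
  case (Cons b bs)
  obtain w P where "b = (w, P)" by force
  then show ?case using Cons by (simp add: sum_lessThan_add block_cost_def)
qed simp

definition placed :: "((nat \<times> nat) \<times> nat) list \<Rightarrow> nat \<Rightarrow> nat \<Rightarrow> nat" where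
  "placed L i k = (case map_of L (i, k) of None \<Rightarrow> 0 | Some s \<Rightarrow> s)"

definition block4 :: block where
  "block4 = (4, placed [((0, 0), 2), ((3, 2), 2)])"

definition block5 :: block where
  "block5 = (5, placed [((0, 0), 2), ((2, 2), 1), ((3, 3), 2)])"

definition block6 :: block where
  "block6 = (6, placed [((0, 0), 2), ((2, 2), 1), ((3, 3), 2), ((1, 5), 1)])"

lemma good_blocks: "good_block 5 block4" "good_block 5 block5" "good_block 5 block6"
  unfolding block4_def block5_def block6_def
  by (simp_all add: placed_def strip_dominating_def strip_reaches_def cycle_dist_def absdiff_def
      All_less_Suc Ex_less_Suc numeral_eq_Suc)

lemma block_costs: "block_cost 5 block4 = 4" "block_cost 5 block5 = 5" "block_cost 5 block6 = 6"
  by (simp_all add: block_cost_def block4_def block5_def block6_def placed_def numeral_eq_Suc)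

text \<open>7 is the only \<open>n \<ge> 4\<close> that is not a sum of 4s, 5s and 6s, and no block of width 7 and
  cost 7 exists; this broadcast needs the wrap-around of \<open>C\<^sub>7\<close>.\<close>

definition torus7 :: "nat \<Rightarrow> nat \<Rightarrow> nat" where
  "torus7 = placed [((0, 0), 2), ((2, 2), 1), ((4, 3), 1), ((1, 4), 1), ((3, 6), 2)]"

lemma torus7_dominating:
  "dominating_broadcast2 (torus_verts 5 7) (torus_adj 5 7) (torus_broadcast 5 7 torus7)"
  by (rule torus_broadcast_dominatingI)
     (simp_all add: torus7_def placed_def cycle_dist_def absdiff_def All_less_Suc Ex_less_Suc numeral_eq_Suc)

lemma torus7_cost: "bcost (torus_verts 5 7) (torus_broadcast 5 7 torus7) = 7"
  by (simp add: bcost_torus_broadcast torus7_def placed_def numeral_eq_Suc)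

lemma ex_dominating_torus5_bcost_eq:
  assumes "4 \<le> n"
  shows "\<exists>f. dominating_broadcast2 (torus_verts 5 n) (torus_adj 5 n) f \<and> bcost (torus_verts 5 n) f = n"
proof (cases "n = 7")
  case True
  then show ?thesis using torus7_dominating torus7_cost by blast
next
  case False
  have "\<exists>q r s. n = 4 * q + 5 * r + 6 * s" using False assms by presburger
  then obtain q r s where n: "n = 4 * q + 5 * r + 6 * s" by blast
  define bs where "bs = replicate q block4 @ replicate r block5 @ replicate s block6"
  have good: "\<forall>b\<in>set bs. good_block 5 b" using good_blocks by (auto simp: bs_def)
  have width: "sum_list (map fst bs) = n"
    by (simp add: bs_def n block4_def block5_def block6_def sum_list_replicate)
  have cost: "sum_list (map (block_cost 5) bs) = n"
    by (simp add: bs_def n block_costs sum_list_replicate)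
  obtain b bs' where "bs = b # bs'" using width assms by (cases bs) auto
  then have start: "concat_blocks bs 0 0 = 2" using good concat_blocks_start[of 5 b bs'] by simp
  show ?thesis
  proof (intro exI conjI)
    show "dominating_broadcast2 (torus_verts 5 n) (torus_adj 5 n) (torus_broadcast 5 n (concat_blocks bs))"
      using torus_dominating_of_strip strip_dominating_concat_blocks[OF good] start concat_blocks_le2[OF good]
      unfolding width by blast
    show "bcost (torus_verts 5 n) (torus_broadcast 5 n (concat_blocks bs)) = n"
      using cost_concat_blocks[of bs 5] cost by (simp add: bcost_torus_broadcast width)
  qed
qed

theorem theorem4p5:
  fixes n :: nat
  assumes "n \<ge> 5"
  shows "gamma_b2 (cart_verts (cycle_verts 5) (cycle_verts n))
                  (cart_adj (cycle_adj 5) (cycle_adj n)) = n"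
proof -
  obtain f where "dominating_broadcast2 (torus_verts 5 n) (torus_adj 5 n) f" "bcost (torus_verts 5 n) f = n"
    using ex_dominating_torus5_bcost_eq[of n] assms by fastforce
  then show ?thesis using dominating_torus_bcost_ge[of 5 n] by (intro gamma_b2_eqI) auto
qed

end
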